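(* Let $n\ge1$ and let $\mathcal C$ be an EACP over $\mathbb R$ with natural basis $\{h_1,\dots,h_n,r\}$ and structural constants $a_{ij},b_i\in\mathbb R$; identify $\sum_i x_ih_i+ur$ with $(x_1,\dots,x_n,u)$. For $u\in\mathbb R$ let $T_u=(t_{ij})_{i,j=1}^n$ with $t_{ij}=ua_{ji}$ for $i\neq j$ and $t_{ii}=ua_{ii}-1$, and let ${\bf b}(x)=\sum_{i=1}^n b_ix_i$ for $x=(x_1,\dots,x_n)$. Then the set of idempotent elements $\{y\in\mathcal C: y^2=y\}$ equals $$\{0\}\cup\{(x_1^*,\dots,x_n^*,u_* ): u_*\neq0,\ \det(T_{u_*})=0,\ T_{u_*}x^*=0,\ {\bf b}(x^* )=1\},$$ where $x^*=(x_1^*,\dots,x_n^* )$ is viewed as a column vector.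
   Context: An EACP over a field $K$ (characteristic $\neq 2$) is a $K$-algebra $\mathcal C$ with a basis $\{h_1,\dots,h_n,r\}$ (called a natural basis) whose multiplication is determined by bilinearity from $$h_ir=rh_i=\tfrac12\Big(\sum_{j=1}^n a_{ij}h_j+b_ir\Big),\qquad h_ih_j=0\ (i,j=1,\dots,n),\qquad rr=0,$$ for some constants $a_{ij},b_i\in K$. *)

theory Defs
  imports "HOL-Analysis.Analysis"
begin

text \<open>Elements of an EACP over the reals with natural basis h_1..h_n, r are identified
with coordinate pairs (x, u) in (real^'n) \<times> real, i.e. sum_i x_i h_i + u r.
Structural constants: A $ i $ j = a_ij, b $ i = b_i.\<close>

definition hb :: "'n::finite \<Rightarrow> (real^'n) \<times> real" where
  "hb i = (axis i 1, 0)"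

definition rb :: "(real^'n::finite) \<times> real" where
  "rb = (0, 1)"

definition hr :: "real^'n^'n \<Rightarrow> real^'n \<Rightarrow> 'n::finite \<Rightarrow> (real^'n) \<times> real" where
  "hr A b i = (1/2) *\<^sub>R ((\<Sum>j\<in>UNIV. (A $ i $ j) *\<^sub>R hb j) + (b $ i) *\<^sub>R rb)"

text \<open>Bilinear extension of the table h_i h_j = 0, h_i r = r h_i = hr, r r = 0.\<close>
definition eacp_mult :: "real^'n^'n \<Rightarrow> real^'n \<Rightarrow> (real^'n) \<times> real \<Rightarrow> (real^'n) \<times> real
    \<Rightarrow> (real^'n::finite) \<times> real" where
  "eacp_mult A b y z =
     (\<Sum>i\<in>UNIV. \<Sum>j\<in>UNIV. (fst y $ i * fst z $ j) *\<^sub>R (0 :: (real^'n) \<times> real))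
   + (\<Sum>i\<in>UNIV. (fst y $ i * snd z) *\<^sub>R hr A b i)
   + (\<Sum>i\<in>UNIV. (snd y * fst z $ i) *\<^sub>R hr A b i)
   + (snd y * snd z) *\<^sub>R (0 :: (real^'n) \<times> real)"

definition Tmat :: "real^'n^'n \<Rightarrow> real \<Rightarrow> real^'n^'n::finite" where
  "Tmat A u = (\<chi> i j. if i = j then u * A $ i $ i - 1 else u * A $ j $ i)"

definition bfun :: "real^'n \<Rightarrow> real^'n::finite \<Rightarrow> real" where
  "bfun b x = (\<Sum>i\<in>UNIV. b $ i * x $ i)"

end

theory Submission
  imports Defs
begin

text \<open>Since h_i h_j = 0 and r r = 0, the square of y = (x, u) is 2 u \<Sum>_i x_i (h_i r)
  = u (\<Sum>_j (\<Sum>_i x_i a_ij) h_j + b(x) r). Comparing coordinates, y is idempotent iff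
  T_u x = 0 and u b(x) = u. If u = 0 then T_0 = -I forces x = 0; otherwise b(x) = 1 makes
  x a nonzero kernel vector of T_u, so det T_u = 0.\<close>

lemma Tmat_eq: "Tmat A u = u *\<^sub>R transpose A - mat 1"
  by (simp add: Tmat_def transpose_def mat_def vec_eq_iff)

lemma Tmat_mult_vec: "Tmat A u *v x = u *\<^sub>R (x v* A) - x"
  by (simp add: Tmat_eq matrix_vector_mult_diff_rdistrib scaleR_matrix_vector_assoc[symmetric])

lemma bfun_zero [simp]: "bfun b 0 = 0"
  by (simp add: bfun_def)

lemma eacp_mult_eq:
  "eacp_mult A b (x, u) (z, w) =
     ((1/2) *\<^sub>R (w *\<^sub>R (x v* A) + u *\<^sub>R (z v* A)), (w * bfun b x + u * bfun b z) / 2)"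
proof -
  have hr: "hr A b i = ((1/2) *\<^sub>R (\<chi> j. A $ i $ j), b $ i / 2)" for i
    by (simp add: hr_def hb_def rb_def fst_sum snd_sum sum_component axis_def vec_eq_iff
        prod_eq_iff if_distrib cong: if_cong)
  show ?thesis
    by (simp add: eacp_mult_def hr prod_eq_iff fst_sum snd_sum vec_eq_iff sum_component
        vector_matrix_mult_def bfun_def sum_divide_distrib sum_distrib_left
        sum.distrib[symmetric] add_divide_distrib algebra_simps)
qed

lemma eacp_square: "eacp_mult A b (x, u) (x, u) = (u *\<^sub>R (x v* A), u * bfun b x)"
  by (simp add: eacp_mult_eq scaleR_2[symmetric])

lemma eacp_idempotent_iff:
  "eacp_mult A b (x, u) (x, u) = (x, u) \<longleftrightarrow> Tmat A u *v x = 0 \<and> u * bfun b x = u"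
  by (simp add: eacp_square Tmat_mult_vec)

lemma det_eq_0_if_kernel_nonzero:
  fixes T :: "'a::field^'n^'n"
  assumes "T *v x = 0" and "x \<noteq> 0"
  shows "det T = 0"
  using assms by (metis invertible_det_nz invertible_def matrix_left_invertible_ker)

theorem mainTheorem9:
  fixes A :: "real^'n^'n" and b :: "real^'n"
  shows "{y. eacp_mult A b y y = y} =
         {0} \<union> {(x, u). u \<noteq> 0 \<and> det (Tmat A u) = 0 \<and> Tmat A u *v x = 0 \<and> bfun b x = 1}"
proof (rule set_eqI)
  fix y :: "(real^'n) \<times> real"
  obtain x u where y: "y = (x, u)"
    by fastforce
  show "y \<in> {y. eacp_mult A b y y = y} \<longleftrightarrow>
    y \<in> {0} \<union> {(x, u). u \<noteq> 0 \<and> det (Tmat A u) = 0 \<and> Tmat A u *v x = 0 \<and> bfun b x = 1}"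
  proof (cases "u = 0")
    case True
    then show ?thesis
      by (simp add: y eacp_idempotent_iff Tmat_mult_vec zero_prod_def eq_neg_iff_add_eq_0)
  next
    case False
    have "Tmat A u *v x = 0 \<Longrightarrow> bfun b x = 1 \<Longrightarrow> det (Tmat A u) = 0"
      using det_eq_0_if_kernel_nonzero by force
    with False show ?thesis
      by (auto simp: y eacp_idempotent_iff zero_prod_def)
  qed
qed

end
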